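(* Let $\alpha\in\mathbb{R}\setminus\{0\}$, let $\delta^{\star}(\alpha)=1/\alpha^2$ if $\alpha\le 2$ and $\delta^{\star}(\alpha)=\frac{1}{2\alpha}\exp\{1-\frac{\alpha}{2}\}$ if $\alpha>2$, let $|\delta|\le\delta^{\star}(\alpha)$, and let $C(u,v)=uv+\delta(1-e^{\alpha(u-u^2)})(1-e^{\alpha(v-v^2)})$ on $[0,1]^2$. Define Spearman's rho $\rho_C=12\int_0^1\int_0^1C(u,v)\,du\,dv-3$, Gini's gamma $\gamma_C=4\{\int_0^1C(u,1-u)\,du-\int_0^1(u-C(u,u))\,du\}$, Kendall's tau $\tau_C=4\int_0^1\int_0^1 C(u,v)\,dC(u,v)-1$, Blest's measure $\eta_C=24\int_0^1\int_0^1(1-u)C(u,v)\,du\,dv-2$, and Spearman's footrule $\phi_C=6\int_0^1 C(u,u)\,du-2$. Then $$\eta_C=\rho_C=\tfrac{3}{2}\tau_C\quad\text{and}\quad \phi_C=\tfrac{3}{4}\gamma_C.$$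
   Context: $\int\int C\,dC$ denotes the Lebesgue–Stieltjes integral of $C$ with respect to the probability measure with distribution function $C$ (equivalently $\int\int C(u,v)c(u,v)\,du\,dv$ with $c=\partial^2C/\partial u\partial v$). *)

theory Defs
  imports "HOL-Analysis.Analysis"
begin

definition delta_star :: "real \<Rightarrow> real" where
  "delta_star \<alpha> = (if \<alpha> \<le> 2 then 1 / \<alpha>\<^sup>2 else (1 / (2 * \<alpha>)) * exp (1 - \<alpha> / 2))"

definition copC :: "real \<Rightarrow> real \<Rightarrow> real \<Rightarrow> real \<Rightarrow> real" where
  "copC \<alpha> \<delta> u v = u * v + \<delta> * (1 - exp (\<alpha> * (u - u\<^sup>2))) * (1 - exp (\<alpha> * (v - v\<^sup>2)))"

definition cop_density :: "(real \<Rightarrow> real \<Rightarrow> real) \<Rightarrow> real \<Rightarrow> real \<Rightarrow> real" where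
  "cop_density C u v = deriv (\<lambda>s. deriv (\<lambda>t. C s t) v) u"

definition spearman_rho :: "(real \<Rightarrow> real \<Rightarrow> real) \<Rightarrow> real" where
  "spearman_rho C = 12 * integral (cbox (0,0) (1,1)) (\<lambda>(u,v). C u v) - 3"

definition gini_gamma :: "(real \<Rightarrow> real \<Rightarrow> real) \<Rightarrow> real" where
  "gini_gamma C = 4 * (integral {0..1} (\<lambda>u. C u (1 - u)) - integral {0..1} (\<lambda>u. u - C u u))"

definition kendall_tau :: "(real \<Rightarrow> real \<Rightarrow> real) \<Rightarrow> real" where
  "kendall_tau C = 4 * integral (cbox (0,0) (1,1)) (\<lambda>(u,v). C u v * cop_density C u v) - 1"

definition blest_eta :: "(real \<Rightarrow> real \<Rightarrow> real) \<Rightarrow> real" where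
  "blest_eta C = 24 * integral (cbox (0,0) (1,1)) (\<lambda>(u,v). (1 - u) * C u v) - 2"

definition footrule_phi :: "(real \<Rightarrow> real \<Rightarrow> real) \<Rightarrow> real" where
  "footrule_phi C = 6 * integral {0..1} (\<lambda>u. C u u) - 2"

end

(*
  Each copula copC alpha delta is a perturbation C(u,v) = u v + delta f(u) f(v) of the independence
  copula by a bump f with f(0) = f(1) = 0 and f(1 - u) = f(u). All five measures then reduce to
  products of one-dimensional integrals. With I = int f and J = int f^2, integration by parts gives
  int u f'(u) = -I and int f f' = 0, and the symmetry gives int u f(u) = I/2, whence
  rho = eta = 12 delta I^2, tau = 8 delta I^2, phi = 6 delta J and gamma = 8 delta J.
*)
theory Submission
  imports Defs
begin

lemma has_integral_power_unit_interval:
  "((\<lambda>u::real. u ^ k) has_integral 1 / Suc k) {0..1}"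
proof -
  have "((\<lambda>u::real. u ^ k) has_integral (\<lambda>u. u ^ Suc k / Suc k) 1 - (\<lambda>u. u ^ Suc k / Suc k) 0) {0..1}"
  proof (rule fundamental_theorem_of_calculus)
    show "((\<lambda>u. u ^ Suc k / Suc k) has_vector_derivative u ^ k) (at u within {0..1})" for u :: real
      using DERIV_cdivide[OF DERIV_pow[of "Suc k" u], of "Suc k"]
      by (simp add: has_real_derivative_iff_has_vector_derivative[symmetric] has_field_derivative_at_within)
  qed simp
  then show ?thesis by simp
qed

lemma has_integral_id_unit_interval: "((\<lambda>u::real. u) has_integral 1 / 2) {0..1}"
  using has_integral_power_unit_interval[of 1] by simp

lemma has_integral_reflect_unit_interval:
  fixes g :: "real \<Rightarrow> 'a::real_normed_vector"
  assumes "(g has_integral I) {0..1}"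
  shows "((\<lambda>u. g (1 - u)) has_integral I) {0..1}"
proof -
  have "((\<lambda>x. g (- x)) has_integral I) {-1..0}"
    using has_integral_reflect_real[where f=g and a=0 and b=1] assms by simp
  from has_integral_shift_real_ivl[OF this, of "-1"] show ?thesis by simp
qed

lemma has_integral_separable_product:
  fixes g h :: "real \<Rightarrow> real"
  assumes "continuous_on {a..b} g" "continuous_on {c..d} h"
    and "(g has_integral A) {a..b}" "(h has_integral B) {c..d}"
  shows "((\<lambda>(u,v). g u * h v) has_integral A * B) (cbox (a,c) (b,d))"
proof -
  have "continuous_on (cbox (a,c) (b,d)) (\<lambda>(u,v). g u * h v)"
    unfolding case_prod_unfold
    by (intro continuous_intros continuous_on_compose2[OF assms(1)] continuous_on_compose2[OF assms(2)])
      (auto simp: cbox_Pair_eq)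
  moreover have "integral (cbox (a,c) (b,d)) (\<lambda>(u,v). g u * h v) = A * B"
    using integral_prod_continuous[OF calculation] assms(3,4) by (simp add: integral_unique)
  ultimately show ?thesis
    by (metis integrable_continuous has_integral_integral)
qed

lemma has_integral_id_mult_symmetric:
  fixes f :: "real \<Rightarrow> real"
  assumes "continuous_on {0..1} f" and "\<And>u. f (1 - u) = f u"
  shows "((\<lambda>u. u * f u) has_integral integral {0..1} f / 2) {0..1}"
proof -
  define K where "K = integral {0..1} (\<lambda>u. u * f u)"
  have K: "((\<lambda>u. u * f u) has_integral K) {0..1}"
    unfolding K_def by (intro integrable_integral integrable_continuous_real continuous_intros assms(1))
  have "((\<lambda>u. (1 - u) * f u) has_integral K) {0..1}"
    using has_integral_reflect_unit_interval[OF K] by (simp add: assms(2))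
  from has_integral_add[OF this K] have "(f has_integral K + K) {0..1}"
    by (simp add: algebra_simps)
  then have "integral {0..1} f = 2 * K"
    by (simp add: integral_unique)
  with K show ?thesis by simp
qed

lemma has_integral_id_mult_deriv:
  fixes f f' :: "real \<Rightarrow> real"
  assumes deriv: "\<And>u. (f has_real_derivative f' u) (at u)" and "f 1 = 0"
  shows "((\<lambda>u. u * f' u) has_integral - integral {0..1} f) {0..1}"
proof -
  have "((\<lambda>u. u * f u) has_real_derivative f u + u * f' u) (at u)" for u
    by (auto intro!: derivative_eq_intros deriv)
  then have "((\<lambda>u. f u + u * f' u) has_integral 1 * f 1 - 0 * f 0) {0..1}"
    by (intro fundamental_theorem_of_calculus)
      (auto simp: has_real_derivative_iff_has_vector_derivative[symmetric] has_field_derivative_at_within)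
  moreover have "(f has_integral integral {0..1} f) {0..1}"
    by (intro integrable_integral integrable_continuous_real DERIV_continuous_on)
      (rule has_field_derivative_at_within[OF deriv])
  ultimately have "((\<lambda>u. (f u + u * f' u) - f u) has_integral 1 * f 1 - 0 * f 0 - integral {0..1} f) {0..1}"
    by (rule has_integral_diff)
  with \<open>f 1 = 0\<close> show ?thesis by simp
qed

lemma has_integral_mult_deriv:
  fixes f f' :: "real \<Rightarrow> real"
  assumes deriv: "\<And>u. (f has_real_derivative f' u) (at u)" and "f 0 = f 1"
  shows "((\<lambda>u. f u * f' u) has_integral 0) {0..1}"
proof -
  have "((\<lambda>u. (f u)\<^sup>2 / 2) has_real_derivative f u * f' u) (at u)" for u
    by (auto intro!: derivative_eq_intros deriv)
  then have "((\<lambda>u. f u * f' u) has_integral (f 1)\<^sup>2 / 2 - (f 0)\<^sup>2 / 2) {0..1}"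
    by (intro fundamental_theorem_of_calculus)
      (auto simp: has_real_derivative_iff_has_vector_derivative[symmetric] has_field_derivative_at_within)
  with \<open>f 0 = f 1\<close> show ?thesis by simp
qed

definition perturbed_product :: "real \<Rightarrow> (real \<Rightarrow> real) \<Rightarrow> real \<Rightarrow> real \<Rightarrow> real" where
  "perturbed_product \<delta> f u v = u * v + \<delta> * f u * f v"

lemma spearman_rho_perturbed_product:
  assumes "continuous_on {0..1} f"
  shows "spearman_rho (perturbed_product \<delta> f) = 12 * \<delta> * (integral {0..1} f)\<^sup>2"
proof -
  let ?I = "integral {0..1} f"
  have f: "(f has_integral ?I) {0..1}"
    using assms by (intro integrable_integral integrable_continuous_real)
  have "((\<lambda>(u,v). perturbed_product \<delta> f u v) has_integral 1/2 * (1/2) + \<delta> * (?I * ?I)) (cbox (0,0) (1,1))"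
    using has_integral_add[OF has_integral_separable_product[OF _ _ has_integral_id_unit_interval has_integral_id_unit_interval]
        has_integral_mult_right[OF has_integral_separable_product[OF assms assms f f], of \<delta>]]
    by (simp add: case_prod_unfold perturbed_product_def continuous_on_id mult.assoc)
  then show ?thesis
    unfolding spearman_rho_def by (simp add: integral_unique power2_eq_square)
qed

lemma blest_eta_perturbed_product:
  assumes "continuous_on {0..1} f" and "\<And>u. f (1 - u) = f u"
  shows "blest_eta (perturbed_product \<delta> f) = 12 * \<delta> * (integral {0..1} f)\<^sup>2"
proof -
  let ?I = "integral {0..1} f"
  have f: "(f has_integral ?I) {0..1}"
    using assms by (intro integrable_integral integrable_continuous_real)
  have u: "((\<lambda>u::real. (1 - u) * u) has_integral 1/6) {0..1}"
    using has_integral_diff[OF has_integral_id_unit_interval has_integral_power_unit_interval[of 2]]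
    by (simp add: power2_eq_square algebra_simps)
  have uf: "((\<lambda>u. (1 - u) * f u) has_integral ?I / 2) {0..1}"
    using has_integral_diff[OF f has_integral_id_mult_symmetric[OF assms]] by (simp add: algebra_simps)
  have "((\<lambda>(u,v). (1 - u) * perturbed_product \<delta> f u v) has_integral 1/6 * (1/2) + \<delta> * (?I / 2 * ?I))
      (cbox (0,0) (1,1))"
    using has_integral_add[OF has_integral_separable_product[OF _ _ u has_integral_id_unit_interval]
        has_integral_mult_right[OF has_integral_separable_product[OF _ assms(1) uf f], of \<delta>]]
    by (simp add: case_prod_unfold perturbed_product_def continuous_intros assms(1) algebra_simps)
  then show ?thesis
    unfolding blest_eta_def by (simp add: integral_unique power2_eq_square)
qed

lemma cop_density_perturbed_product:
  assumes "\<And>x. (f has_real_derivative f' x) (at x)"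
  shows "cop_density (perturbed_product \<delta> f) u v = 1 + \<delta> * f' u * f' v"
proof -
  have "deriv (\<lambda>t. perturbed_product \<delta> f s t) v = s + \<delta> * f s * f' v" for s
    unfolding perturbed_product_def by (rule DERIV_imp_deriv) (auto intro!: derivative_eq_intros assms)
  then have "cop_density (perturbed_product \<delta> f) u v = deriv (\<lambda>s. s + \<delta> * f s * f' v) u"
    unfolding cop_density_def by simp
  also have "\<dots> = 1 + \<delta> * f' u * f' v"
    by (rule DERIV_imp_deriv) (auto intro!: derivative_eq_intros assms)
  finally show ?thesis .
qed

lemma kendall_tau_perturbed_product:
  assumes deriv: "\<And>x. (f has_real_derivative f' x) (at x)" and "continuous_on {0..1} f'"
    and "f 0 = 0" and "f 1 = 0"
  shows "kendall_tau (perturbed_product \<delta> f) = 8 * \<delta> * (integral {0..1} f)\<^sup>2"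
proof -
  let ?I = "integral {0..1} f"
  have cont: "continuous_on {0..1} f"
    by (rule DERIV_continuous_on[OF has_field_derivative_at_within[OF deriv]])
  have f: "(f has_integral ?I) {0..1}"
    using cont by (intro integrable_integral integrable_continuous_real)
  have uf': "((\<lambda>u. u * f' u) has_integral - ?I) {0..1}"
    using has_integral_id_mult_deriv[OF deriv \<open>f 1 = 0\<close>] .
  have ff': "((\<lambda>u. f u * f' u) has_integral 0) {0..1}"
    using has_integral_mult_deriv[OF deriv] assms(3,4) by simp
  note cont_intros = continuous_intros cont \<open>continuous_on {0..1} f'\<close>
  have "((\<lambda>(u,v). perturbed_product \<delta> f u v * cop_density (perturbed_product \<delta> f) u v) has_integral
      (1/2 * (1/2) + \<delta> * (- ?I * - ?I)) + (\<delta> * (?I * ?I) + \<delta>\<^sup>2 * (0 * 0))) (cbox (0,0) (1,1))"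
    using has_integral_add[OF
        has_integral_add[OF has_integral_separable_product[OF _ _ has_integral_id_unit_interval has_integral_id_unit_interval]
          has_integral_mult_right[OF has_integral_separable_product[OF _ _ uf' uf'], of \<delta>]]
        has_integral_add[OF has_integral_mult_right[OF has_integral_separable_product[OF cont cont f f], of \<delta>]
          has_integral_mult_right[OF has_integral_separable_product[OF _ _ ff' ff'], of "\<delta>\<^sup>2"]]]
    by (simp add: case_prod_unfold perturbed_product_def cop_density_perturbed_product[OF deriv]
        cont_intros algebra_simps power2_eq_square)
  then show ?thesis
    unfolding kendall_tau_def by (simp add: integral_unique power2_eq_square)
qed

lemma footrule_phi_perturbed_product:
  assumes "continuous_on {0..1} f"
  shows "footrule_phi (perturbed_product \<delta> f) = 6 * \<delta> * integral {0..1} (\<lambda>u. (f u)\<^sup>2)"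
proof -
  have "((\<lambda>u. (f u)\<^sup>2) has_integral integral {0..1} (\<lambda>u. (f u)\<^sup>2)) {0..1}"
    using assms by (intro integrable_integral integrable_continuous_real continuous_intros)
  from has_integral_add[OF has_integral_power_unit_interval[of 2] has_integral_mult_right[OF this, of \<delta>]]
  have "((\<lambda>u. perturbed_product \<delta> f u u) has_integral 1/3 + \<delta> * integral {0..1} (\<lambda>u. (f u)\<^sup>2)) {0..1}"
    by (simp add: perturbed_product_def power2_eq_square mult.assoc)
  then show ?thesis
    unfolding footrule_phi_def by (simp add: integral_unique)
qed

lemma gini_gamma_perturbed_product:
  assumes "continuous_on {0..1} f" and "\<And>u. f (1 - u) = f u"
  shows "gini_gamma (perturbed_product \<delta> f) = 8 * \<delta> * integral {0..1} (\<lambda>u. (f u)\<^sup>2)"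
proof -
  let ?J = "integral {0..1} (\<lambda>u. (f u)\<^sup>2)"
  have "((\<lambda>u. (f u)\<^sup>2) has_integral ?J) {0..1}"
    using assms by (intro integrable_integral integrable_continuous_real continuous_intros)
  then have J: "((\<lambda>u. \<delta> * (f u * f u)) has_integral \<delta> * ?J) {0..1}"
    by (simp add: has_integral_mult_right power2_eq_square)
  have u2: "((\<lambda>u::real. u * u) has_integral 1/3) {0..1}"
    using has_integral_power_unit_interval[of 2] by (simp add: power2_eq_square)
  have "((\<lambda>u. perturbed_product \<delta> f u (1 - u)) has_integral (1/2 - 1/3) + \<delta> * ?J) {0..1}"
    using has_integral_add[OF has_integral_diff[OF has_integral_id_unit_interval u2] J]
    by (simp add: perturbed_product_def assms(2) algebra_simps)
  moreover have "((\<lambda>u. u - perturbed_product \<delta> f u u) has_integral 1/2 - (1/3 + \<delta> * ?J)) {0..1}"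
    using has_integral_diff[OF has_integral_id_unit_interval has_integral_add[OF u2 J]]
    by (simp add: perturbed_product_def algebra_simps)
  ultimately show ?thesis
    unfolding gini_gamma_def by (simp add: integral_unique)
qed

definition exp_bump :: "real \<Rightarrow> real \<Rightarrow> real" where
  "exp_bump \<alpha> u = 1 - exp (\<alpha> * (u - u\<^sup>2))"

lemma copC_eq_perturbed_product: "copC \<alpha> \<delta> = perturbed_product \<delta> (exp_bump \<alpha>)"
  by (simp add: fun_eq_iff copC_def perturbed_product_def exp_bump_def)

lemma exp_bump_has_derivative:
  "(exp_bump \<alpha> has_real_derivative - exp (\<alpha> * (u - u\<^sup>2)) * \<alpha> * (1 - 2 * u)) (at u)"
  unfolding exp_bump_def
  by (auto intro!: derivative_eq_intros simp: power2_eq_square algebra_simps)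

lemma exp_bump_symmetric: "exp_bump \<alpha> (1 - u) = exp_bump \<alpha> u"
  by (simp add: exp_bump_def power2_eq_square algebra_simps)

theorem mainTheorem3:
  fixes \<alpha> \<delta> :: real
  assumes "\<alpha> \<noteq> 0"
    and "\<bar>\<delta>\<bar> \<le> delta_star \<alpha>"
  shows "blest_eta (copC \<alpha> \<delta>) = spearman_rho (copC \<alpha> \<delta>)
       \<and> spearman_rho (copC \<alpha> \<delta>) = 3 / 2 * kendall_tau (copC \<alpha> \<delta>)
       \<and> footrule_phi (copC \<alpha> \<delta>) = 3 / 4 * gini_gamma (copC \<alpha> \<delta>)"
proof -
  \<comment> \<open>The hypotheses only make copC a copula; the identities hold for all \<alpha> and \<delta>.\<close>
  let ?f = "exp_bump \<alpha>"
  have cont: "continuous_on {0..1} ?f"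
    unfolding exp_bump_def by (intro continuous_intros)
  have "kendall_tau (copC \<alpha> \<delta>) = 8 * \<delta> * (integral {0..1} ?f)\<^sup>2"
    unfolding copC_eq_perturbed_product
    by (rule kendall_tau_perturbed_product[OF exp_bump_has_derivative])
      (auto simp: exp_bump_def intro!: continuous_intros)
  then show ?thesis
    unfolding copC_eq_perturbed_product
    by (simp add: spearman_rho_perturbed_product blest_eta_perturbed_product
        footrule_phi_perturbed_product gini_gamma_perturbed_product cont exp_bump_symmetric)
qed

end
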